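(* Let $d>1$, let $F$ be a field of characteristic $0$ or coprime to $d$ with $\mu_{d^2}\subset F$, and let $E/F$ be a cyclic Galois extension of degree $d$. Let $\mathcal{G}=\mathrm{Gal}(F_{\mathrm{sep}}/F)$, $\mathcal{H}=\mathrm{Gal}(F_{\mathrm{sep}}/E)$, and $G=\mathcal{G}/\mathcal{H}=\langle\tau\rangle$, cyclic of order $d$. Consider the discrete $\mathcal{G}$-modules (action through $G$) $\overline{M_1}=\mathbb{Z}/d\mathbb{Z}$ (trivial action), $\overline{M_2}=\overline{M_3}=(\mathbb{Z}/d\mathbb{Z})[G]$ (left multiplication), $\overline{M_4}=\mathbb{Z}/d\mathbb{Z}$ (trivial), and the maps $d_1:\overline{M_1}\to\overline{M_2}$, $n\mapsto n\sum_{g\in G}g$; $d_2:\overline{M_2}\to\overline{M_3}$, $x\mapsto x(1-\tau)$; $d_3:\overline{M_3}\to\overline{M_4}$, $\sum_g c_g g\mapsto \sum_g c_g$; and $h_2:\overline{M_3}\to\overline{M_2}$, $x\mapsto x\sum_{i=0}^{d-1}(-i)\tau^i$. Let $\ell:\overline{M_4}\to\overline{M_3}$ be the additive map $x\mapsto x\cdot 1_G$. Let $n\ge 1$ and let $c\in Z^{n-1}(\mathcal{G},\overline{M_4})$ be an inhomogeneous cocycle, and $\delta$ the coboundary of the (inhomogeneous) bar complex. Then $h_2(\delta(\ell\circ c))$ takes values in $d_1(\overline{M_1})$ and \[ -d_1^{-1}\big(h_2(\delta(\ell\circ c))\big)=-\chi_{\mathcal{H}}\smile c, \] where $\chi_{\mathcal{H}}:\mathcal{G}\to\mathbb{Z}/d\mathbb{Z}$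 is the character with $\chi_{\mathcal{H}}(g)=k$ whenever $g\mathcal{H}=\tau^k$, and $(\chi_{\mathcal{H}}\smile c)(g_1,\dots,g_n)=\chi_{\mathcal{H}}(g_1)\,c(g_2,\dots,g_n)$.
   Context: The left-hand side is the paper's connecting map $\eta(c)$ in the cyclic case; $d_1^{-1}$ denotes the inverse of the injective map $d_1$ on its image. *)

theory Defs
  imports "HOL-Algebra.Group" "HOL-Library.Function_Algebras" "HOL-Number_Theory.Cong"
begin

(* Conventions.
   * Z/dZ is represented by int, equality in Z/dZ being congruence mod d.
   * G = <tau>, cyclic of order d; tau^k is identified with k in {0..<d}.
   * An element sum_{i<d} x_i tau^i of (Z/dZ)[G] is represented by its
     coefficient function x :: nat => int (only indices i < d are meaningful).
   * The profinite group \<G> is an abstract group Gamma; its action on the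
     modules factors through G via a surjective character chi : Gamma -> Z/dZ
     (chi g = k iff g\<H> = tau^k); \<H> = kernel of chi.
   * An inhomogeneous k-cochain is a function on lists of length k. *)

definition gr_mult :: "nat \<Rightarrow> (nat \<Rightarrow> int) \<Rightarrow> (nat \<Rightarrow> int) \<Rightarrow> (nat \<Rightarrow> int)" where
  "gr_mult d x y = (\<lambda>j. \<Sum>i<d. x i * y (nat ((int j - int i) mod int d)))"

definition tau_act :: "nat \<Rightarrow> nat \<Rightarrow> (nat \<Rightarrow> int) \<Rightarrow> (nat \<Rightarrow> int)" where
  "tau_act d k x = (\<lambda>i. x (nat ((int i - int k) mod int d)))"

definition gr_act :: "nat \<Rightarrow> ('g \<Rightarrow> nat) \<Rightarrow> 'g \<Rightarrow> (nat \<Rightarrow> int) \<Rightarrow> (nat \<Rightarrow> int)" where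
  "gr_act d chi g x = tau_act d (chi g) x"

definition d1 :: "nat \<Rightarrow> int \<Rightarrow> (nat \<Rightarrow> int)" where
  "d1 d m = (\<lambda>i. m)"

definition h2 :: "nat \<Rightarrow> (nat \<Rightarrow> int) \<Rightarrow> (nat \<Rightarrow> int)" where
  "h2 d x = gr_mult d x (\<lambda>i. - int i)"

definition ell :: "int \<Rightarrow> (nat \<Rightarrow> int)" where
  "ell m = (\<lambda>i. if i = 0 then m else 0)"

definition cobdry :: "('g, 'b) monoid_scheme \<Rightarrow> ('g \<Rightarrow> 'm \<Rightarrow> 'm) \<Rightarrow> nat
    \<Rightarrow> ('g list \<Rightarrow> 'm::ab_group_add) \<Rightarrow> 'g list \<Rightarrow> 'm" where
  "cobdry G act k f gs =
     act (gs ! 0) (f (drop 1 gs))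
     + (\<Sum>i\<in>{1..k}. (let v = f (take (i - 1) gs @ [gs ! (i - 1) \<otimes>\<^bsub>G\<^esub> gs ! i] @ drop (i + 1) gs)
                       in if even i then v else - v))
     + (if even (k + 1) then f (take k gs) else - f (take k gs))"

definition cup_char :: "('g \<Rightarrow> nat) \<Rightarrow> ('g list \<Rightarrow> int) \<Rightarrow> 'g list \<Rightarrow> int" where
  "cup_char chi c gs = int (chi (gs ! 0)) * c (drop 1 gs)"

end

theory Submission
  imports Defs
begin

text \<open>Because \<open>\<ell>\<close> is additive, the twisted coboundary of \<open>\<ell> \<circ> c\<close> differs from
  \<open>\<ell>(\<delta>c)\<close> only in its first term:
  \<open>\<delta>(\<ell> \<circ> c)(g\<^sub>1,\<dots>,g\<^sub>n) = (\<tau>\<^sup>m - 1)\<ell>(a) + \<ell>(\<delta>c(g\<^sub>1,\<dots>,g\<^sub>n))\<close> with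
  \<open>m = \<chi>(g\<^sub>1)\<close> and \<open>a = c(g\<^sub>2,\<dots>,g\<^sub>n)\<close>, and the second term vanishes mod \<open>d\<close>
  since \<open>c\<close> is a cocycle. Modulo \<open>d\<close>, multiplication by \<open>\<Sum>(-i)\<tau>\<^sup>i\<close> sends \<open>\<tau> - 1\<close> to the
  norm element, hence \<open>(\<tau>\<^sup>m - 1)a\<close> to \<open>m a\<cdot>\<Sum>\<^sub>g g = d\<^sub>1(\<chi>(g\<^sub>1) a)\<close>; coordinatewise,
  \<open>-a((j - m) mod d) + a j \<equiv> m a\<close>.\<close>

lemma cobdry_comp_additive:
  fixes f :: "'a::ab_group_add \<Rightarrow> 'b::ab_group_add"
  assumes f_add: "\<And>x y. f (x + y) = f x + f y"
  shows "cobdry G act k (\<lambda>hs. f (c hs)) gs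
    = act (gs ! 0) (f (c (drop 1 gs))) + f (cobdry G (\<lambda>g x. x) k c gs - c (drop 1 gs))"
proof -
  have f_zero: "f 0 = 0"
    using f_add[of 0 0] by simp
  have f_minus: "f (- x) = - f x" for x
    using f_add[of x "- x"] f_zero by (simp add: minus_unique)
  have f_sum: "f (sum g A) = (\<Sum>a\<in>A. f (g a))" for g :: "nat \<Rightarrow> 'a" and A
    using sum_comp_morphism[of f g A, OF f_zero f_add] by (simp add: comp_def)
  have f_sign: "f (if P then v else - v) = (if P then f v else - f v)" for P v
    by (simp add: f_minus)
  show ?thesis
    unfolding cobdry_def Let_def f_sum[symmetric] f_sign[symmetric]
    by (simp add: f_add f_minus)
qed

lemma ell_add: "ell (x + y) = ell x + ell y"
  by (auto simp: ell_def fun_eq_iff)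

lemma gr_mult_add_left: "gr_mult d (x + y) z = gr_mult d x z + gr_mult d y z"
  by (simp add: gr_mult_def distrib_right sum.distrib fun_eq_iff)

lemma h2_add: "h2 d (x + y) = h2 d x + h2 d y"
  by (simp add: h2_def gr_mult_add_left)

lemma gr_mult_delta:
  assumes "m < d" and x: "\<And>i. i < d \<Longrightarrow> x i = (if i = m then a else 0)"
  shows "gr_mult d x y j = a * y (nat ((int j - int m) mod int d))"
proof -
  have "gr_mult d x y j = (\<Sum>i<d. if i = m then a * y (nat ((int j - int i) mod int d)) else 0)"
    unfolding gr_mult_def by (rule sum.cong) (simp_all add: x)
  then show ?thesis
    using \<open>m < d\<close> by simp
qed

lemma tau_act_ell:
  assumes "m < d" "i < d"
  shows "tau_act d m (ell a) i = (if i = m then a else 0)"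
proof -
  have "nat ((int i - int m) mod int d) = 0 \<longleftrightarrow> (int i - int m) mod int d = 0"
    using pos_mod_sign[of "int d" "int i - int m"] assms by linarith
  also have "\<dots> \<longleftrightarrow> [int i = int m] (mod int d)"
    by (simp add: cong_iff_dvd_diff mod_eq_0_iff_dvd)
  also have "\<dots> \<longleftrightarrow> i = m"
    using assms by (auto simp: cong_int_iff cong_less_modulus_unique_nat)
  finally show ?thesis
    by (simp add: tau_act_def ell_def)
qed

lemma h2_tau_act_ell:
  "m < d \<Longrightarrow> h2 d (tau_act d m (ell a)) j = - a * int (nat ((int j - int m) mod int d))"
  using gr_mult_delta[of m d "tau_act d m (ell a)" a "\<lambda>i. - int i" j]
  by (simp add: h2_def tau_act_ell)

lemma h2_ell: "j < d \<Longrightarrow> h2 d (ell a) j = - a * int j"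
  using gr_mult_delta[of 0 d "ell a" a "\<lambda>i. - int i" j]
  by (simp add: h2_def ell_def)

theorem theorem4p6:
  fixes Gamma :: "('g, 'b) monoid_scheme"
    and chi :: "'g \<Rightarrow> nat" and d n :: nat and c :: "'g list \<Rightarrow> int"
  assumes d_gt: "d > 1"
    and grp: "group Gamma"
    and chi_range: "chi ` carrier Gamma = {..<d}"
    and chi_hom: "\<forall>g\<in>carrier Gamma. \<forall>h\<in>carrier Gamma.
                    chi (g \<otimes>\<^bsub>Gamma\<^esub> h) = (chi g + chi h) mod d"
    and n_ge: "n \<ge> 1"
    and cocycle: "\<forall>gs. set gs \<subseteq> carrier Gamma \<and> length gs = n \<longrightarrow>
                    [cobdry Gamma (\<lambda>g x. x) (n - 1) c gs = 0] (mod int d)"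
  shows "\<forall>gs. set gs \<subseteq> carrier Gamma \<and> length gs = n \<longrightarrow>
           (\<forall>i<d. [h2 d (cobdry Gamma (gr_act d chi) (n - 1) (\<lambda>hs. ell (c hs)) gs) i
                   = d1 d (cup_char chi c gs) i] (mod int d))"
proof (intro allI impI)
  \<comment> \<open>The identity is checked pointwise.\<close>
  fix gs j
  assume gs: "set gs \<subseteq> carrier Gamma \<and> length gs = n" and j: "j < d"
  define m a e where "m = chi (gs ! 0)" and "a = c (drop 1 gs)"
    and "e = cobdry Gamma (\<lambda>g x. x) (n - 1) c gs"
  have "gs ! 0 \<in> carrier Gamma"
    using gs n_ge nth_mem[of 0 gs] by (simp add: subset_iff)
  then have m: "m < d"
    using chi_range m_def by blast
  have e: "[e = 0] (mod int d)"
    using cocycle gs e_def by blast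
  have "h2 d (cobdry Gamma (gr_act d chi) (n - 1) (\<lambda>hs. ell (c hs)) gs) j
      = - a * int (nat ((int j - int m) mod int d)) - (e - a) * int j"
    using m j by (simp add: cobdry_comp_additive[OF ell_add] gr_act_def h2_add h2_tau_act_ell
        h2_ell m_def a_def e_def) (simp add: algebra_simps)
  also have "[- a * int (nat ((int j - int m) mod int d)) - (e - a) * int j
      = - a * (int j - int m) - (e - a) * int j] (mod int d)"
    using m by (intro cong_diff cong_mult cong_refl) simp
  also have "- a * (int j - int m) - (e - a) * int j = int m * a - e * int j"
    by (simp add: algebra_simps)
  also have "[int m * a - e * int j = int m * a - 0 * int j] (mod int d)"
    using e by (intro cong_diff cong_mult cong_refl)
  finally show "[h2 d (cobdry Gamma (gr_act d chi) (n - 1) (\<lambda>hs. ell (c hs)) gs) j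
      = d1 d (cup_char chi c gs) j] (mod int d)"
    by (simp add: d1_def cup_char_def m_def a_def)
qed

end
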